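(* Let $A,B\in gl(3,\mathbb{R})$ and consider the induced bilinear control system on $\mathbb{S}^2$ $$\dot s=h_A(s)+u\,h_B(s),\qquad s\in\mathbb{S}^2,\ u\in\mathbb{R},$$ where $h_C(s)=Cs-\langle Cs,s\rangle s$ for $C\in gl(3,\mathbb{R})$. If $$\operatorname{rank}\begin{pmatrix}h_A(s) & h_B(s) & h_{[A,B]}(s)\end{pmatrix}=2\quad\text{for all } s\in\mathbb{S}^2,$$ then the system satisfies the Lie algebra rank condition on $\mathbb{S}^2$. In particular, if $[A,B]=0$, the system does not satisfy the Lie algebra rank condition.
   Context: $gl(3,\mathbb{R})$ is the space of real $3\times3$ matrices, $[A,B]=AB-BA$, and $\langle\cdot,\cdot\rangle$ the Euclidean inner product. Let $\mathcal{L}_\Sigma$ be the Lie subalgebra of the Lie algebra $\chi(\mathbb{S}^2)$ of smooth vector fields on $\mathbb{S}^2$ (bracket $[X,Y]=dX(Y)-dY(X)$) generated by $\{h_A+uh_B:u\in\mathbb{R}\}$, and $\mathcal{L}_\Sigma(s)=\{X(s):X\in\mathcal{L}_\Sigma\}\subset T_s\mathbb{S}^2$. The system satisfies the Lie algebra rank condition (LARC) on $\mathbb{S}^2$ if $\dim\mathcal{L}_\Sigma(s)=2$ for every $s\in\mathbb{S}^2$. *)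

theory Defs
  imports "HOL-Analysis.Analysis"
begin

definition S2 :: "(real^3) set" where
  "S2 = {s. norm s = 1}"

definition commutator :: "real^3^3 \<Rightarrow> real^3^3 \<Rightarrow> real^3^3" where
  "commutator A B = A ** B - B ** A"

text \<open>Induced vector field h_C(s) = Cs - <Cs,s> s (given by a polynomial formula on all of R^3).\<close>
definition hfield :: "real^3^3 \<Rightarrow> real^3 \<Rightarrow> real^3" where
  "hfield C s = C *v s - ((C *v s) \<bullet> s) *\<^sub>R s"

definition vf_bracket :: "(real^3 \<Rightarrow> real^3) \<Rightarrow> (real^3 \<Rightarrow> real^3) \<Rightarrow> real^3 \<Rightarrow> real^3" where
  "vf_bracket X Y = (\<lambda>x. frechet_derivative X (at x) (Y x) - frechet_derivative Y (at x) (X x))"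

text \<open>All members are polynomial (hence smooth) fields on R^3, tangent to S^2;
  their values on S^2 are the corresponding vector fields on S^2.\<close>
inductive_set lie_gen :: "real^3^3 \<Rightarrow> real^3^3 \<Rightarrow> (real^3 \<Rightarrow> real^3) set"
  for A B :: "real^3^3" where
  gen: "(\<lambda>s. hfield A s + u *\<^sub>R hfield B s) \<in> lie_gen A B"
| add: "X \<in> lie_gen A B \<Longrightarrow> Y \<in> lie_gen A B \<Longrightarrow> (\<lambda>s. X s + Y s) \<in> lie_gen A B"
| smult: "X \<in> lie_gen A B \<Longrightarrow> (\<lambda>s. c *\<^sub>R X s) \<in> lie_gen A B"
| bracket: "X \<in> lie_gen A B \<Longrightarrow> Y \<in> lie_gen A B \<Longrightarrow> vf_bracket X Y \<in> lie_gen A B"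

definition lie_eval :: "real^3^3 \<Rightarrow> real^3^3 \<Rightarrow> real^3 \<Rightarrow> (real^3) set" where
  "lie_eval A B s = {X s | X. X \<in> lie_gen A B}"

definition LARC :: "real^3^3 \<Rightarrow> real^3^3 \<Rightarrow> bool" where
  "LARC A B \<longleftrightarrow> (\<forall>s\<in>S2. dim (lie_eval A B s) = 2)"

definition hmatrix :: "real^3^3 \<Rightarrow> real^3^3 \<Rightarrow> real^3 \<Rightarrow> real^3^3" where
  "hmatrix A B s = transpose (vector [hfield A s, hfield B s, hfield (commutator A B) s])"

end

theory Submission
  imports Defs "HOL-Real_Asymp.Real_Asymp"
begin

text \<open>The map \<open>C \<mapsto> h\<^sub>C\<close> is a Lie algebra homomorphism: \<open>[h\<^sub>C, h\<^sub>D] = h\<^bsub>[C,D]\<^esub>\<close>.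
  Hence every field in \<open>L\<^sub>\<Sigma>\<close> is some \<open>h\<^sub>C\<close>, and all of these are tangent to the sphere,
  so \<open>dim L\<^sub>\<Sigma>(s) \<le> 2\<close>; as \<open>h\<^sub>A\<close>, \<open>h\<^sub>B\<close> and \<open>h\<^bsub>[A,B]\<^esub>\<close> lie in \<open>L\<^sub>\<Sigma>\<close>,
  the rank hypothesis gives the reverse inequality.
  If \<open>[A,B] = 0\<close>, then the span of \<open>A\<close> and \<open>B\<close> is already a Lie algebra, so
  \<open>L\<^sub>\<Sigma>\<close> consists of the \<open>h\<^sub>C\<close> with \<open>C\<close> in that span. Since 3 is odd, \<open>A\<close> has a real
  unit eigenvector \<open>s\<close>; there \<open>h\<^sub>A(s) = 0\<close>, so \<open>L\<^sub>\<Sigma>(s)\<close> is spanned by \<open>h\<^sub>B(s)\<close>.\<close>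

lemma cubic_has_real_root: "\<exists>t::real. t^3 + a*t^2 + b*t + c = 0"
proof -
  define f where "f t = t^3 + a*t^2 + b*t + c" for t :: real
  have "\<forall>\<^sub>F t in at_top. f t > 0" unfolding f_def by real_asymp
  then obtain x where x: "f x > 0" unfolding eventually_at_top_linorder by blast
  have "\<forall>\<^sub>F t in at_bot. f t < 0" unfolding f_def by real_asymp
  then obtain N where N: "\<And>t. t \<le> N \<Longrightarrow> f t < 0" unfolding eventually_at_bot_linorder by blast
  have "continuous_on {min N x..x} f" unfolding f_def by (intro continuous_intros)
  then obtain t where "f t = 0" using IVT'[of f "min N x" 0 x] x N[of "min N x"] by force
  then show ?thesis unfolding f_def by blast
qed

lemma matrix_add_rdistrib: "((A::'a::semiring_1^'n^'m) + B) ** C = A ** C + B ** C"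
  by (simp add: matrix_matrix_mult_def vec_eq_iff sum.distrib algebra_simps)

lemma bilinear_commutator: "bilinear commutator"
  unfolding bilinear_def commutator_def
  by (auto intro!: linearI simp: matrix_add_ldistrib matrix_add_rdistrib matrix_scalar_ac
      scalar_matrix_assoc[symmetric] algebra_simps)

lemma commutator_self [simp]: "commutator A A = 0"
  by (simp add: commutator_def)

lemma commutator_swap: "commutator B A = - commutator A B"
  by (simp add: commutator_def)

lemma commutator_eq_0_on_span:
  assumes "commutator A B = 0" "C \<in> span {A, B}" "D \<in> span {A, B}"
  shows "commutator C D = 0"
proof -
  have "commutator B A = 0"
    using assms(1) by (simp add: commutator_swap[of B])
  then show ?thesis
    using assms(1)
    by (intro bilinear_eq[OF bilinear_commutator _ subset_refl subset_refl assms(2,3)])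
      (auto simp: bilinear_def linear_zero)
qed

lemma hfield_add [simp]: "hfield (C + D) s = hfield C s + hfield D s"
  unfolding hfield_def by (simp add: matrix_vector_mult_add_rdistrib inner_add_left algebra_simps)

lemma hfield_scaleR [simp]: "hfield (c *\<^sub>R C) s = c *\<^sub>R hfield C s"
  unfolding hfield_def by (simp add: scaleR_matrix_vector_assoc[symmetric] algebra_simps)

lemma linear_hfield: "linear (\<lambda>C. hfield C s)"
  by (simp add: linearI)

lemma has_derivative_hfield:
  "(hfield C has_derivative
     (\<lambda>v. C *v v - ((C *v v) \<bullet> x + (C *v x) \<bullet> v) *\<^sub>R x - ((C *v x) \<bullet> x) *\<^sub>R v)) (at x)"
  unfolding hfield_def
  by (auto intro!: derivative_eq_intros bounded_linear_imp_has_derivative simp: algebra_simps inner_commute)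

lemma vf_bracket_hfield: "vf_bracket (hfield C) (hfield D) = hfield (commutator C D)"
proof
  fix x
  have d: "frechet_derivative (hfield E) (at x) v =
      E *v v - ((E *v v) \<bullet> x + (E *v x) \<bullet> v) *\<^sub>R x - ((E *v x) \<bullet> x) *\<^sub>R v" for E v
    using has_derivative_hfield[of E x] by (simp add: frechet_derivative_at[symmetric])
  show "vf_bracket (hfield C) (hfield D) x = hfield (commutator C D) x"
    unfolding vf_bracket_def d
    unfolding hfield_def commutator_def matrix_vector_mult_diff_rdistrib
      matrix_vector_mul_assoc[symmetric] matrix_vector_mult_diff_distrib matrix_vector_mult_scaleR
    by (simp add: inner_diff_left inner_diff_right algebra_simps inner_commute)
qed

lemma lie_gen_subset_hfield_image:
  assumes M: "subspace M" "A \<in> M" "B \<in> M"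
    and commutator_closed: "\<And>C D. C \<in> M \<Longrightarrow> D \<in> M \<Longrightarrow> commutator C D \<in> M"
  shows "lie_gen A B \<subseteq> hfield ` M"
proof
  fix X assume "X \<in> lie_gen A B"
  then show "X \<in> hfield ` M"
  proof induction
    case (gen u)
    have "(\<lambda>s. hfield A s + u *\<^sub>R hfield B s) = hfield (A + u *\<^sub>R B)"
      by auto
    then show ?case
      using M by (metis image_eqI subspace_add subspace_scale)
  next
    case (add X Y)
    then show ?case
      using M(1) by (auto intro!: image_eqI[where x = "_ + _"] subspace_add)
  next
    case (smult X c)
    then show ?case
      using M(1) by (auto intro!: image_eqI[where x = "c *\<^sub>R _"] subspace_scale)
  next
    case (bracket X Y)
    then show ?case
      by (auto simp: vf_bracket_hfield intro: commutator_closed)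
  qed
qed

lemma inner_hfield_eq_0: "s \<bullet> s = 1 \<Longrightarrow> s \<bullet> hfield C s = 0"
  by (simp add: hfield_def inner_diff_right inner_commute)

lemma subspace_lie_eval: "subspace (lie_eval A B s)"
proof (unfold subspace_def, intro conjI ballI allI)
  have "(\<lambda>s. 0 *\<^sub>R (hfield A s + 0 *\<^sub>R hfield B s)) \<in> lie_gen A B"
    by (intro lie_gen.smult lie_gen.gen)
  then show "0 \<in> lie_eval A B s"
    unfolding lie_eval_def by force
next
  fix x y assume "x \<in> lie_eval A B s" "y \<in> lie_eval A B s"
  then obtain X Y where "X \<in> lie_gen A B" "Y \<in> lie_gen A B" "x = X s" "y = Y s"
    unfolding lie_eval_def by blast
  then show "x + y \<in> lie_eval A B s"
    unfolding lie_eval_def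
    by (intro CollectI exI[of _ "\<lambda>s. X s + Y s"]) (simp add: lie_gen.add)
next
  fix c x assume "x \<in> lie_eval A B s"
  then obtain X where "X \<in> lie_gen A B" "x = X s"
    unfolding lie_eval_def by blast
  then show "c *\<^sub>R x \<in> lie_eval A B s"
    unfolding lie_eval_def
    by (intro CollectI exI[of _ "\<lambda>s. c *\<^sub>R X s"]) (simp add: lie_gen.smult)
qed

lemma inner_self_eq_1_if_in_S2: "s \<in> S2 \<Longrightarrow> s \<bullet> s = 1"
  by (simp add: S2_def power2_norm_eq_inner[symmetric])

lemma dim_lie_eval_le_2:
  assumes "s \<in> S2"
  shows "dim (lie_eval A B s) \<le> 2"
proof -
  have unit: "s \<bullet> s = 1"
    using assms by (rule inner_self_eq_1_if_in_S2)
  have "lie_eval A B s \<subseteq> {x. s \<bullet> x = 0}"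
    using lie_gen_subset_hfield_image[of UNIV A B] inner_hfield_eq_0[OF unit]
    unfolding lie_eval_def by auto
  then have "dim (lie_eval A B s) \<le> dim {x. s \<bullet> x = 0}"
    by (rule dim_subset)
  also have "\<dots> = 2"
    using unit dim_hyperplane[of s] by (cases "s = 0") simp_all
  finally show ?thesis .
qed

lemma hfields_subset_lie_eval:
  "{hfield A s, hfield B s, hfield (commutator A B) s} \<subseteq> lie_eval A B s"
proof -
  have gen: "hfield (A + u *\<^sub>R B) s \<in> lie_eval A B s" for u
    unfolding lie_eval_def
    by (intro CollectI exI[of _ "\<lambda>s. hfield A s + u *\<^sub>R hfield B s"]) (simp add: lie_gen.gen)
  have hA: "hfield A s \<in> lie_eval A B s"
    using gen[of 0] by simp
  have "hfield (A + 1 *\<^sub>R B) s - hfield A s \<in> lie_eval A B s"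
    by (rule subspace_diff[OF subspace_lie_eval gen hA])
  then have hB: "hfield B s \<in> lie_eval A B s"
    by simp
  have "vf_bracket (\<lambda>s. hfield A s + 0 *\<^sub>R hfield B s) (\<lambda>s. hfield A s + 1 *\<^sub>R hfield B s)
      \<in> lie_gen A B"
    by (intro lie_gen.bracket lie_gen.gen)
  moreover have "vf_bracket (\<lambda>s. hfield A s + 0 *\<^sub>R hfield B s) (\<lambda>s. hfield A s + 1 *\<^sub>R hfield B s)
      = hfield (commutator A B)"
  proof -
    have "(\<lambda>s. hfield A s + 1 *\<^sub>R hfield B s) = hfield (A + B)"
      by auto
    then show ?thesis
      by (simp add: vf_bracket_hfield bilinear_radd[OF bilinear_commutator])
  qed
  ultimately have "hfield (commutator A B) s \<in> lie_eval A B s"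
    unfolding lie_eval_def by force
  with hA hB show ?thesis
    by simp
qed

lemma rows_vector_3: "rows (vector [a, b, c] :: 'a::zero^'n^3) = {a, b, c}"
proof -
  have univ: "(UNIV :: 3 set) = {1, 2, 3}"
    using exhaust_3 by auto
  have "rows (vector [a, b, c] :: 'a^'n^3) = range (\<lambda>i::3. vector [a, b, c] $ i)"
    unfolding rows_def row_def by (auto simp: vec_lambda_eta)
  then show ?thesis
    by (simp add: univ vector_3)
qed

lemma rank_hmatrix:
  "rank (hmatrix A B s) = dim {hfield A s, hfield B s, hfield (commutator A B) s}"
  unfolding hmatrix_def column_rank_def columns_transpose rows_vector_3 ..

lemma LARC_if_rank_hmatrix_eq_2:
  assumes "\<forall>s\<in>S2. rank (hmatrix A B s) = 2"
  shows "LARC A B"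
  unfolding LARC_def
proof
  fix s assume s: "s \<in> S2"
  have "2 = dim {hfield A s, hfield B s, hfield (commutator A B) s}"
    using assms s by (simp add: rank_hmatrix)
  also have "\<dots> \<le> dim (lie_eval A B s)"
    by (rule dim_subset[OF hfields_subset_lie_eval])
  finally show "dim (lie_eval A B s) = 2"
    using dim_lie_eval_le_2[OF s, of A B] by linarith
qed

lemma ex_real_eigenvalue_3:
  fixes A :: "real^3^3"
  shows "\<exists>t. det (A - t *\<^sub>R mat 1) = 0"
proof -
  define a where "a = - (A$1$1 + A$2$2 + A$3$3)"
  define b where "b = A$1$1*A$2$2 - A$1$2*A$2$1 + A$1$1*A$3$3 - A$1$3*A$3$1 + A$2$2*A$3$3 - A$2$3*A$3$2"
  have charpoly: "det (A - t *\<^sub>R mat 1) = - (t^3 + a*t^2 + b*t + (- det A))" for t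
    unfolding a_def b_def by (simp add: det_3 mat_def power2_eq_square power3_eq_cube algebra_simps)
  obtain t where "t^3 + a*t^2 + b*t + (- det A) = 0"
    using cubic_has_real_root by blast
  then have "det (A - t *\<^sub>R mat 1) = 0"
    unfolding charpoly by simp
  then show ?thesis ..
qed

lemma ex_eigenvector_in_S2:
  fixes A :: "real^3^3"
  shows "\<exists>s\<in>S2. \<exists>t. A *v s = t *\<^sub>R s"
proof -
  obtain t where "det (A - t *\<^sub>R mat 1) = 0"
    using ex_real_eigenvalue_3 by blast
  then have "\<nexists>M. M ** (A - t *\<^sub>R mat 1) = mat 1"
    using invertible_det_nz invertible_left_inverse by blast
  then obtain v where v: "v \<noteq> 0" "(A - t *\<^sub>R mat 1) *v v = 0"
    unfolding matrix_left_invertible_ker by blast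
  then have "A *v v = t *\<^sub>R v"
    by (simp add: matrix_vector_mult_diff_rdistrib scaleR_matrix_vector_assoc[symmetric])
  then have "A *v (v /\<^sub>R norm v) = t *\<^sub>R (v /\<^sub>R norm v)"
    by (simp add: matrix_vector_mult_scaleR)
  moreover have "v /\<^sub>R norm v \<in> S2"
    using v(1) by (simp add: S2_def)
  ultimately show ?thesis
    by blast
qed

lemma hfield_eq_0_at_eigenvector:
  assumes "s \<in> S2" "A *v s = t *\<^sub>R s"
  shows "hfield A s = 0"
  using assms by (simp add: hfield_def inner_self_eq_1_if_in_S2)

lemma lie_gen_subset_hfield_span:
  assumes "commutator A B = 0"
  shows "lie_gen A B \<subseteq> hfield ` span {A, B}"
  using assms
  by (intro lie_gen_subset_hfield_image)
    (simp_all add: span_base commutator_eq_0_on_span span_zero)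

lemma not_LARC_if_commutator_eq_0:
  assumes "commutator A B = 0"
  shows "\<not> LARC A B"
proof -
  obtain s t where s: "s \<in> S2" "A *v s = t *\<^sub>R s"
    using ex_eigenvector_in_S2 by blast
  have "lie_eval A B s \<subseteq> (\<lambda>C. hfield C s) ` span {A, B}"
    using lie_gen_subset_hfield_span[OF assms] unfolding lie_eval_def by auto
  also have "\<dots> = span {hfield A s, hfield B s}"
    by (simp add: span_linear_image[OF linear_hfield, symmetric])
  also have "\<dots> = span {hfield B s}"
    using hfield_eq_0_at_eigenvector[OF s] by simp
  finally have "dim (lie_eval A B s) \<le> card {hfield B s}"
    by (rule dim_le_card) simp
  then have "dim (lie_eval A B s) \<noteq> 2"
    by simp
  with s(1) show ?thesis
    unfolding LARC_def by blast
qed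

theorem theorem2p7:
  fixes A B :: "real^3^3"
  shows "((\<forall>s\<in>S2. rank (hmatrix A B s) = 2) \<longrightarrow> LARC A B)
         \<and> (commutator A B = 0 \<longrightarrow> \<not> LARC A B)"
  using LARC_if_rank_hmatrix_eq_2 not_LARC_if_commutator_eq_0 by blast

end
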